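(* Let $\varrho:\mathbb R\to\mathbb R$ be bounded and locally Hölder with some exponent $\gamma>1/2$ on each compact interval, and fix $\bar y\in\mathbb R$. Write $x_{n,r}=\lfloor n\bar y\rfloor+\lfloor r\sqrt n\rfloor$ and $X^{(n,t,r)}=X^{x_{n,r}+\lfloor ntb\rfloor,\lfloor nt\rfloor}_{\lfloor nt\rfloor}$, and define \[ H^n(t,r)=\sum_{i\in\mathbb Z}\varrho(i/n)\Bigl(\mathbf 1\{i>x_{n,r}\}P^\omega\{i\le X^{(n,t,r)}\}-\mathbf 1\{i\le x_{n,r}\}P^\omega\{i>X^{(n,t,r)}\}\Bigr). \] Then for any $S,T<\infty$ and $\mathbb P$-almost every $\omega$, \[ \lim_{n\to\infty}\sup_{0\le t\le T,\,-S\le r\le S}n^{-1/4}\Bigl|H^n(t,r)-\varrho(\bar y)\,E^\omega\bigl(X^{(n,t,r)}-x_{n,r}\bigr)\Bigr|=0. \]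
   Context: Environment setup: Fix an integer $M\ge1$. $\mathcal P$ = probability vectors $u=(u(y):-M\le y\le M)$, with $u(y)=0$ for $|y|>M$. Environment $\omega=(\omega_{x,\tau})\in\Omega=\mathcal P^{\mathbb Z^2}$, $u^\omega_\tau(x,y)=\omega_{x,\tau}(y)$; under $\mathbb P$ the $\omega_{x,\tau}$ are i.i.d. $p(0,j)=\mathbb Eu_0(0,j)$. (A1) no integer $h>1$ and $x$ with $\sum_kp(0,x+kh)=1$; (A2) $\mathbb P\{\max_ju_0(0,j)<1\}>0$. Backward walk $X^{i,\tau}_s$: Markov chain under quenched $P^\omega$ (expectation $E^\omega$), $X^{i,\tau}_0=i$, $P^\omega(X^{i,\tau}_{s+1}=y\mid X^{i,\tau}_s=x)=u^\omega_{\tau-s}(x,y-x)$. $V=\sum_jjp(0,j)$, $b=-V$. *)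

theory Defs
  imports "HOL-Probability.Probability"
begin

definition probvec :: "int \<Rightarrow> (int \<Rightarrow> real) set" where
  "probvec M = {u. (\<forall>y. 0 \<le> u y) \<and> (\<forall>y. M < \<bar>y\<bar> \<longrightarrow> u y = 0)
                   \<and> (\<Sum>y\<in>{-M..M}. u y) = 1}"

definition envp :: "(int \<Rightarrow> real) measure \<Rightarrow> int \<Rightarrow> real" where
  "envp \<mu> j = (\<integral>u. u j \<partial>\<mu>)"

definition envV :: "(int \<Rightarrow> real) measure \<Rightarrow> int \<Rightarrow> real" where
  "envV \<mu> M = (\<Sum>j\<in>{-M..M}. of_int j * envp \<mu> j)"

text \<open>Quenched law of the backward walk:
  qprob w tau i s y = P^w(X^{i,tau}_s = y), with environment w (x,tau) = omega_{x,tau}.\<close>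
fun qprob :: "(int \<times> int \<Rightarrow> int \<Rightarrow> real) \<Rightarrow> int \<Rightarrow> int \<Rightarrow> nat \<Rightarrow> int \<Rightarrow> real" where
  "qprob w tau i 0 y = (if y = i then 1 else 0)"
| "qprob w tau i (Suc s) y = (\<Sum>\<^sub>\<infinity>x. qprob w tau i s x * w (x, tau - int s) (y - x))"

definition qP :: "(int \<times> int \<Rightarrow> int \<Rightarrow> real) \<Rightarrow> int \<Rightarrow> int \<Rightarrow> nat \<Rightarrow> int set \<Rightarrow> real" where
  "qP w tau i s A = (\<Sum>\<^sub>\<infinity>y\<in>A. qprob w tau i s y)"

definition xnr :: "real \<Rightarrow> nat \<Rightarrow> real \<Rightarrow> int" where
  "xnr ybar n r = \<lfloor>real n * ybar\<rfloor> + \<lfloor>r * sqrt (real n)\<rfloor>"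

text \<open>X^{(n,t,r)} = X^{x_{n,r} + floor(n t b), floor(n t)}_{floor(n t)}:
  starting point, time label tau and number of steps.\<close>
definition start :: "real \<Rightarrow> real \<Rightarrow> nat \<Rightarrow> real \<Rightarrow> real \<Rightarrow> int" where
  "start b ybar n t r = xnr ybar n r + \<lfloor>real n * t * b\<rfloor>"

definition tlab :: "nat \<Rightarrow> real \<Rightarrow> int" where
  "tlab n t = \<lfloor>real n * t\<rfloor>"

definition Hn :: "(real \<Rightarrow> real) \<Rightarrow> (int \<times> int \<Rightarrow> int \<Rightarrow> real) \<Rightarrow> real \<Rightarrow> real
                   \<Rightarrow> nat \<Rightarrow> real \<Rightarrow> real \<Rightarrow> real" where
  "Hn \<rho> w b ybar n t r =
     (let x = xnr ybar n r; i0 = start b ybar n t r; tau = tlab n t; s = nat (tlab n t)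
      in \<Sum>\<^sub>\<infinity>i::int. \<rho> (real_of_int i / real n) *
            ((if i > x then qP w tau i0 s {i..} else 0)
           - (if i \<le> x then qP w tau i0 s {..<i} else 0)))"

definition EXc :: "(int \<times> int \<Rightarrow> int \<Rightarrow> real) \<Rightarrow> real \<Rightarrow> real \<Rightarrow> nat \<Rightarrow> real \<Rightarrow> real \<Rightarrow> real" where
  "EXc w b ybar n t r =
     (\<Sum>\<^sub>\<infinity>y::int. real_of_int (y - xnr ybar n r) *
        qprob w (tlab n t) (start b ybar n t r) (nat (tlab n t)) y)"

end

theory Submission
  imports Defs "HOL-Real_Asymp.Real_Asymp"
begin

text \<open>
  Write \<open>c = X\<^sub>0 + s V\<close> for the annealed centre of the walk after \<open>s\<close> steps. Each step
  multiplies the annealed exponential moment of \<open>X - c\<close> by at most \<open>1 + K \<lambda>\<^sup>2\<close>, so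
  \<open>E E\<^sup>\<omega> cosh (\<lambda> (X - c)) \<le> exp (K \<lambda>\<^sup>2 s)\<close>. For \<open>\<lambda> = n\<^sup>-\<^sup>1\<^sup>/\<^sup>2\<close> and \<open>s \<le> n T\<close>,
  Markov's inequality and Borel-Cantelli over the \<open>O(n\<^sup>2)\<close> relevant starting points and times show
  that almost surely, for large \<open>n\<close>, all these quenched moments are below \<open>n\<^sup>4\<close>; so the quenched
  law gives mass at most \<open>n\<^sup>-\<^sup>2\<close> to the region beyond distance \<open>6 \<surd>n log n\<close> from \<open>c\<close>.

  Now \<open>H\<^sup>n - \<rho>(y) E\<^sup>\<omega>(X - x) = \<Sum>\<^sub>i (\<rho>(i/n) - \<rho>(y)) a\<^sub>i\<close>, where \<open>a\<^sub>i\<close> is, up to sign, the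
  quenched probability that the walk ends on the far side of level \<open>i\<close> as seen from \<open>x\<close>, and
  \<open>\<Sum>\<^sub>i a\<^sub>i = E\<^sup>\<omega>(X - x)\<close>. Levels within \<open>6 \<surd>n log n\<close> of \<open>c\<close> satisfy
  \<open>\<bar>i/n - y\<bar> = O(log n / \<surd>n)\<close>, so by Hoelder continuity they contribute
  \<open>O(\<surd>n log n (log n / \<surd>n)\<^sup>\<gamma>) = o(n\<^sup>1\<^sup>/\<^sup>4)\<close> precisely because \<open>\<gamma> > 1/2\<close>; the \<open>O(n)\<close>
  remaining levels contribute \<open>O(1/n)\<close>.
\<close>

section \<open>The quenched law of the walk\<close>

type_synonym env = "int \<times> int \<Rightarrow> int \<Rightarrow> real"

definition clamp01 :: "real \<Rightarrow> real" where
  "clamp01 z = max 0 (min 1 z)"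

lemma clamp01_nonneg: "0 \<le> clamp01 z"
  and clamp01_le_1: "clamp01 z \<le> 1"
  by (auto simp: clamp01_def)

lemma clamp01_id: "0 \<le> z \<Longrightarrow> z \<le> 1 \<Longrightarrow> clamp01 z = z"
  by (auto simp: clamp01_def)

lemma borel_measurable_clamp01 [measurable]: "clamp01 \<in> borel_measurable borel"
  unfolding clamp01_def by measurable

text \<open>The kernel is clamped to \<open>[0,1]\<close> so that the law is bounded and measurable in every
  environment; on environments of probability vectors it agrees with \<open>qprob\<close>.\<close>
fun walk_law :: "env \<Rightarrow> int \<Rightarrow> int \<Rightarrow> int \<Rightarrow> nat \<Rightarrow> int \<Rightarrow> real" where
  "walk_law w M tau i 0 y = (if y = i then 1 else 0)"
| "walk_law w M tau i (Suc s) y =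
     (\<Sum>j\<in>{-M..M}. walk_law w M tau i s (y - j) * clamp01 (w (y - j, tau - int s) j))"

definition walk_range :: "int \<Rightarrow> int \<Rightarrow> nat \<Rightarrow> int set" where
  "walk_range M i s = {i - M * int s .. i + M * int s}"

lemma finite_walk_range [simp]: "finite (walk_range M i s)"
  by (simp add: walk_range_def)

lemma walk_law_nonneg: "0 \<le> walk_law w M tau i s y"
  by (induction s arbitrary: y) (auto intro!: sum_nonneg mult_nonneg_nonneg clamp01_nonneg)

lemma walk_law_le:
  assumes "M \<ge> 0"
  shows "walk_law w M tau i s y \<le> (2 * real_of_int M + 1) ^ s"
proof (induction s arbitrary: y)
  case (Suc s)
  have "walk_law w M tau i (Suc s) y \<le> (\<Sum>j\<in>{-M..M}. (2 * real_of_int M + 1) ^ s)"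
    unfolding walk_law.simps
    using Suc.IH by (intro sum_mono order_trans[OF mult_right_le_one_le])
      (auto simp: walk_law_nonneg clamp01_nonneg clamp01_le_1)
  also have "\<dots> = (2 * real_of_int M + 1) ^ Suc s"
    using assms by (simp add: of_nat_nat)
  finally show ?case .
qed simp

lemma walk_law_outside_range:
  assumes "M \<ge> 0" and "y \<notin> walk_range M i s"
  shows "walk_law w M tau i s y = 0"
  using assms(2)
proof (induction s arbitrary: y)
  case (Suc s)
  have "walk_law w M tau i s (y - j) = 0" if "j \<in> {-M..M}" for j
    using Suc.prems that assms(1) by (intro Suc.IH) (auto simp: walk_range_def algebra_simps)
  then show ?case by simp
qed (auto simp: walk_range_def)

lemma walk_law_cong:
  assumes "\<And>x t. tau - int s < t \<Longrightarrow> t \<le> tau \<Longrightarrow> w (x, t) = w' (x, t)"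
  shows "walk_law w M tau i s y = walk_law w' M tau i s y"
  using assms
proof (induction s arbitrary: y)
  case (Suc s)
  have "walk_law w M tau i s z = walk_law w' M tau i s z" for z
    using Suc.prems by (intro Suc.IH) auto
  moreover have "w (z, tau - int s) = w' (z, tau - int s)" for z
    using Suc.prems by auto
  ultimately show ?case by simp
qed simp

lemma measurable_env_entry:
  assumes "sets \<mu> = sets (PiM (UNIV :: int set) (\<lambda>_. borel))"
  shows "(\<lambda>w. w k j) \<in> borel_measurable (PiM (UNIV :: (int \<times> int) set) (\<lambda>_. \<mu>))"
proof -
  have "(\<lambda>u. u j) \<in> borel_measurable (PiM (UNIV :: int set) (\<lambda>_. borel))"
    by simp
  then have "(\<lambda>u. u j) \<in> borel_measurable \<mu>"
    using measurable_cong_sets[OF assms refl, of borel] by metis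
  moreover have "(\<lambda>w. w k) \<in> measurable (PiM (UNIV :: (int \<times> int) set) (\<lambda>_. \<mu>)) \<mu>"
    by (rule measurable_component_singleton) simp
  ultimately show ?thesis
    by (rule measurable_compose[rotated])
qed

lemma borel_measurable_walk_law:
  assumes "sets \<mu> = sets (PiM (UNIV :: int set) (\<lambda>_. borel))"
  shows "(\<lambda>w. walk_law w M tau i s y) \<in> borel_measurable (PiM (UNIV :: (int \<times> int) set) (\<lambda>_. \<mu>))"
proof (induction s arbitrary: y)
  case (Suc s)
  have "(\<lambda>w. clamp01 (w k j)) \<in> borel_measurable (PiM UNIV (\<lambda>_. \<mu>))"
    for k :: "int \<times> int" and j
    using measurable_compose[OF measurable_env_entry[OF assms] borel_measurable_clamp01] by simp
  then show ?case using Suc by (simp add: borel_measurable_sum borel_measurable_times)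
qed simp

lemma sum_shift_support:
  fixes G :: "int \<Rightarrow> real"
  assumes "\<And>x. x \<notin> B \<Longrightarrow> G x = 0" and "B \<subseteq> {a - j .. b - j}"
  shows "(\<Sum>y\<in>{a..b}. G (y - j)) = (\<Sum>x\<in>B. G x)"
proof -
  have "(\<Sum>y\<in>{a..b}. G (y - j)) = (\<Sum>x\<in>{a - j..b - j}. G x)"
    by (rule sum.reindex_bij_witness[of _ "\<lambda>x. x + j" "\<lambda>y. y - j"]) auto
  also have "\<dots> = (\<Sum>x\<in>B. G x)"
    using assms by (intro sum.mono_neutral_right) auto
  finally show ?thesis .
qed

lemma sum_walk_law_Suc:
  assumes M: "M \<ge> 0"
  shows "(\<Sum>y\<in>walk_range M i (Suc s). walk_law w M tau i (Suc s) y * H y) =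
    (\<Sum>j\<in>{-M..M}. \<Sum>x\<in>walk_range M i s.
        walk_law w M tau i s x * clamp01 (w (x, tau - int s) j) * H (x + j))"
proof -
  have "(\<Sum>y\<in>walk_range M i (Suc s). walk_law w M tau i (Suc s) y * H y) =
     (\<Sum>j\<in>{-M..M}. \<Sum>y\<in>walk_range M i (Suc s).
        walk_law w M tau i s (y - j) * clamp01 (w (y - j, tau - int s) j) * H ((y - j) + j))"
    by (simp add: sum_distrib_right sum.swap[of _ "walk_range M i (Suc s)"])
  also have "\<dots> = (\<Sum>j\<in>{-M..M}. \<Sum>x\<in>walk_range M i s.
        walk_law w M tau i s x * clamp01 (w (x, tau - int s) j) * H (x + j))"
    unfolding walk_range_def[of M i "Suc s"]
    by (intro sum.cong refl sum_shift_support)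
      (auto simp: walk_law_outside_range[OF M] walk_range_def algebra_simps)
  finally show ?thesis .
qed

lemma infsum_finite_support:
  fixes f :: "'a \<Rightarrow> real"
  assumes "finite F" and "\<And>x. x \<in> A \<Longrightarrow> x \<notin> F \<Longrightarrow> f x = 0"
  shows "infsum f A = sum f (A \<inter> F)"
proof -
  have "infsum f A = infsum f (A \<inter> F)"
    by (rule infsum_cong_neutral) (use assms(2) in auto)
  then show ?thesis using assms(1) by simp
qed

lemma probvec_nonneg: "u \<in> probvec M \<Longrightarrow> 0 \<le> u j"
  and probvec_outside: "u \<in> probvec M \<Longrightarrow> M < \<bar>j\<bar> \<Longrightarrow> u j = 0"
  and probvec_sum: "u \<in> probvec M \<Longrightarrow> (\<Sum>j\<in>{-M..M}. u j) = 1"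
  by (auto simp: probvec_def)

lemma probvec_le_1:
  assumes "u \<in> probvec M"
  shows "u j \<le> 1"
proof (cases "\<bar>j\<bar> \<le> M")
  case True
  then have "u j \<le> (\<Sum>y\<in>{-M..M}. u y)"
    using assms by (intro member_le_sum) (auto simp: probvec_nonneg)
  then show ?thesis using assms by (simp add: probvec_sum)
qed (use assms in \<open>simp add: probvec_outside\<close>)

lemma clamp01_probvec: "u \<in> probvec M \<Longrightarrow> clamp01 (u j) = u j"
  by (intro clamp01_id probvec_nonneg probvec_le_1)

definition probvec_env :: "int \<Rightarrow> env \<Rightarrow> bool" where
  "probvec_env M w \<longleftrightarrow> (\<forall>k. w k \<in> probvec M)"

lemma probvec_envD: "probvec_env M w \<Longrightarrow> w k \<in> probvec M"
  unfolding probvec_env_def by blast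

lemma sum_walk_law:
  assumes "M \<ge> 0" and "probvec_env M w"
  shows "(\<Sum>y\<in>walk_range M i s. walk_law w M tau i s y) = 1"
proof (induction s)
  case 0
  then show ?case by (simp add: walk_range_def)
next
  case (Suc s)
  have "(\<Sum>y\<in>walk_range M i (Suc s). walk_law w M tau i (Suc s) y * 1) =
      (\<Sum>j\<in>{-M..M}. \<Sum>x\<in>walk_range M i s.
          walk_law w M tau i s x * clamp01 (w (x, tau - int s) j) * 1)"
    by (rule sum_walk_law_Suc[OF assms(1)])
  also have "\<dots> = (\<Sum>x\<in>walk_range M i s. walk_law w M tau i s x * (\<Sum>j\<in>{-M..M}. w (x, tau - int s) j))"
    by (subst sum.swap) (simp add: sum_distrib_left clamp01_probvec[OF probvec_envD[OF assms(2)]])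
  finally show ?case using Suc by (simp add: probvec_sum[OF probvec_envD[OF assms(2)]])
qed

lemma qprob_eq_walk_law:
  assumes "M \<ge> 0" and "probvec_env M w"
  shows "qprob w tau i s = walk_law w M tau i s"
proof
  fix y show "qprob w tau i s y = walk_law w M tau i s y"
  proof (induction s arbitrary: y)
    case (Suc s)
    have "qprob w tau i (Suc s) y = (\<Sum>\<^sub>\<infinity>x. walk_law w M tau i s x * w (x, tau - int s) (y - x))"
      by (simp add: Suc.IH)
    also have "\<dots> = (\<Sum>x\<in>{y - M..y + M}. walk_law w M tau i s x * w (x, tau - int s) (y - x))"
      by (subst infsum_finite_support[where F = "{y - M..y + M}"])
        (use probvec_outside[OF probvec_envD[OF assms(2)]] in auto)
    also have "\<dots> = (\<Sum>j\<in>{-M..M}. walk_law w M tau i s (y - j) * clamp01 (w (y - j, tau - int s) j))"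
      by (rule sum.reindex_bij_witness[of _ "\<lambda>j. y - j" "\<lambda>x. y - x"])
        (auto simp: clamp01_probvec[OF probvec_envD[OF assms(2)]])
    finally show ?case by simp
  qed simp
qed

lemma qP_eq_sum_walk_law:
  assumes "M \<ge> 0" and "probvec_env M w"
  shows "qP w tau i s A = (\<Sum>y\<in>A \<inter> walk_range M i s. walk_law w M tau i s y)"
  unfolding qP_def qprob_eq_walk_law[OF assms]
  by (rule infsum_finite_support) (simp_all add: walk_law_outside_range[OF assms(1)])

section \<open>Independence of disjoint coordinates of a product measure\<close>

lemma measurable_extend_coordinates:
  assumes "u0 \<in> space \<mu>"
  shows "(\<lambda>v k. if k \<in> A then v k else u0) \<in> measurable (PiM A (\<lambda>_. \<mu>)) (PiM UNIV (\<lambda>_. \<mu>))"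
proof (rule measurable_PiM_single')
  show "(\<lambda>v. if k \<in> A then v k else u0) \<in> measurable (PiM A (\<lambda>_. \<mu>)) \<mu>" for k
    by (cases "k \<in> A") (auto intro: measurable_component_singleton simp: assms)
qed (use assms in \<open>auto simp: space_PiM\<close>)

lemma integral_mult_disjoint_coordinates:
  fixes \<mu> :: "'a measure" and f g :: "('i \<Rightarrow> 'a) \<Rightarrow> real"
  assumes "prob_space \<mu>" and "A \<inter> B = {}"
    and f: "f \<in> borel_measurable (PiM UNIV (\<lambda>_. \<mu>))" "\<And>w. \<bar>f w\<bar> \<le> cf"
      "\<And>w w'. (\<And>k. k \<in> A \<Longrightarrow> w k = w' k) \<Longrightarrow> f w = f w'"
    and g: "g \<in> borel_measurable (PiM UNIV (\<lambda>_. \<mu>))" "\<And>w. \<bar>g w\<bar> \<le> cg"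
      "\<And>w w'. (\<And>k. k \<in> B \<Longrightarrow> w k = w' k) \<Longrightarrow> g w = g w'"
  shows "(\<integral>w. f w * g w \<partial>PiM UNIV (\<lambda>_. \<mu>)) =
         (\<integral>w. f w \<partial>PiM UNIV (\<lambda>_. \<mu>)) * (\<integral>w. g w \<partial>PiM UNIV (\<lambda>_. \<mu>))"
proof -
  let ?P = "PiM (UNIV :: 'i set) (\<lambda>_. \<mu>)"
  interpret P: prob_space ?P by (rule prob_space_PiM) (rule assms(1))
  have coords: "P.indep_vars (\<lambda>_. \<mu>) (\<lambda>i w. w i) UNIV"
  proof (subst P.indep_vars_iff_distr_eq_PiM)
    have "?P = (\<Pi>\<^sub>M i\<in>UNIV. distr ?P \<mu> (\<lambda>w. w i))"
      by (intro PiM_cong refl distr_PiM_component[symmetric] assms(1)) simp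
    then show "distr ?P ?P (\<lambda>x. \<lambda>i\<in>UNIV. x i) = (\<Pi>\<^sub>M i\<in>UNIV. distr ?P \<mu> (\<lambda>w. w i))"
      by (simp add: restrict_UNIV distr_id)
  qed (auto intro: measurable_component_singleton)
  have restrictions: "P.indep_var (PiM A (\<lambda>_. \<mu>)) (\<lambda>w. restrict w A) (PiM B (\<lambda>_. \<mu>)) (\<lambda>w. restrict w B)"
    by (rule P.indep_var_restrict[OF coords assms(2)]) auto
  obtain u0 where u0: "u0 \<in> space \<mu>" using prob_space.not_empty[OF assms(1)] by blast
  let ?eA = "\<lambda>v k. if k \<in> A then v k else u0" and ?eB = "\<lambda>v k. if k \<in> B then v k else u0"
  have "f \<circ> ?eA \<in> borel_measurable (PiM A (\<lambda>_. \<mu>))" "g \<circ> ?eB \<in> borel_measurable (PiM B (\<lambda>_. \<mu>))"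
    using measurable_comp[OF measurable_extend_coordinates[OF u0] f(1)]
      measurable_comp[OF measurable_extend_coordinates[OF u0] g(1)] by auto
  note indep = P.indep_var_compose[OF restrictions this]
  have "(f \<circ> ?eA) \<circ> (\<lambda>w. restrict w A) = f"
    by (rule ext, simp, rule f(3)) simp
  moreover have "(g \<circ> ?eB) \<circ> (\<lambda>w. restrict w B) = g"
    by (rule ext, simp, rule g(3)) simp
  ultimately have "P.indep_var borel f borel g"
    using indep by simp
  moreover have "integrable ?P f"
    by (rule P.integrable_const_bound[where B = cf]) (use f(1,2) in auto)
  moreover have "integrable ?P g"
    by (rule P.integrable_const_bound[where B = cg]) (use g(1,2) in auto)
  ultimately show ?thesis by (rule P.indep_var_lebesgue_integral)
qed

lemma integral_PiM_component:
  fixes h :: "'a \<Rightarrow> real"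
  assumes "prob_space \<mu>" and "h \<in> borel_measurable \<mu>"
  shows "(\<integral>w. h (w k) \<partial>PiM UNIV (\<lambda>_. \<mu>)) = (\<integral>u. h u \<partial>\<mu>)"
proof -
  have "(\<integral>u. h u \<partial>\<mu>) = (\<integral>u. h u \<partial>distr (PiM UNIV (\<lambda>_. \<mu>)) \<mu> (\<lambda>w. w k))"
    by (subst distr_PiM_component) (use assms(1) in auto)
  also have "\<dots> = (\<integral>w. h (w k) \<partial>PiM UNIV (\<lambda>_. \<mu>))"
    by (rule integral_distr) (auto intro: measurable_component_singleton assms(2))
  finally show ?thesis by simp
qed

lemma AE_PiM_all_components:
  assumes "prob_space \<mu>" and "AE u in \<mu>. P u"
  shows "AE w in PiM (UNIV :: 'i :: countable set) (\<lambda>_. \<mu>). \<forall>k. P (w k)"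
proof -
  have "AE w in PiM (UNIV :: 'i set) (\<lambda>_. \<mu>). P (w k)" for k
    by (rule AE_PiM_component) (use assms in auto)
  then show ?thesis by (subst AE_all_countable) auto
qed

section \<open>Annealed exponential moments\<close>

locale iid_env =
  fixes M :: int and \<mu> :: "(int \<Rightarrow> real) measure"
  assumes M: "M \<ge> 1"
    and prob: "prob_space \<mu>"
    and sets: "sets \<mu> = sets (PiM (UNIV :: int set) (\<lambda>_. borel))"
    and supp: "AE u in \<mu>. u \<in> probvec M"
begin

abbreviation Penv :: "env measure" where
  "Penv \<equiv> PiM UNIV (\<lambda>_. \<mu>)"

sublocale site: prob_space \<mu>
  by (rule prob)

sublocale Penv: prob_space Penv
  by (rule prob_space_PiM) (rule prob)

lemma M_nonneg: "M \<ge> 0"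
  using M by simp

lemma AE_probvec_env: "AE w in Penv. probvec_env M w"
  unfolding probvec_env_def by (rule AE_PiM_all_components[OF prob supp])

lemma borel_measurable_clamp01_entry: "(\<lambda>u. clamp01 (u j)) \<in> borel_measurable \<mu>"
proof -
  have "(\<lambda>u. u j) \<in> borel_measurable (PiM (UNIV :: int set) (\<lambda>_. borel))"
    by simp
  then have "(\<lambda>u. u j) \<in> borel_measurable \<mu>"
    using measurable_cong_sets[OF sets refl, of borel] by metis
  then show ?thesis by simp
qed

lemma envp_eq_integral_clamp01: "envp \<mu> j = (\<integral>u. clamp01 (u j) \<partial>\<mu>)"
  unfolding envp_def
  by (rule integral_cong_AE) (use supp borel_measurable_clamp01_entry in
      \<open>auto simp: clamp01_probvec measurable_cong_sets[OF sets refl]\<close>)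

lemma envp_nonneg: "0 \<le> envp \<mu> j"
  unfolding envp_eq_integral_clamp01 by (rule Bochner_Integration.integral_nonneg) (simp add: clamp01_nonneg)

lemma sum_envp: "(\<Sum>j\<in>{-M..M}. envp \<mu> j) = 1"
proof -
  have "(\<Sum>j\<in>{-M..M}. envp \<mu> j) = (\<integral>u. (\<Sum>j\<in>{-M..M}. clamp01 (u j)) \<partial>\<mu>)"
    unfolding envp_eq_integral_clamp01
    by (intro Bochner_Integration.integral_sum[symmetric] site.integrable_const_bound[where B = 1])
      (auto intro!: borel_measurable_clamp01_entry simp: clamp01_nonneg clamp01_le_1 abs_of_nonneg)
  also have "\<dots> = (\<integral>u. 1 \<partial>\<mu>)"
    by (rule integral_cong_AE) (use supp borel_measurable_clamp01_entry in
        \<open>auto simp: clamp01_probvec probvec_sum\<close>)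
  finally show ?thesis using site.prob_space by simp
qed

lemma abs_envV_le: "\<bar>envV \<mu> M\<bar> \<le> M"
proof -
  have "\<bar>envV \<mu> M\<bar> \<le> (\<Sum>j\<in>{-M..M}. of_int M * envp \<mu> j)"
    unfolding envV_def
    by (rule order_trans[OF sum_abs sum_mono]) (auto simp: abs_mult envp_nonneg intro!: mult_right_mono)
  then show ?thesis by (simp add: sum_distrib_left[symmetric] sum_envp)
qed

definition step_mgf :: "real \<Rightarrow> real" where
  "step_mgf l = (\<Sum>j\<in>{-M..M}. envp \<mu> j * exp (l * of_int j))"

definition walk_mgf :: "env \<Rightarrow> real \<Rightarrow> int \<Rightarrow> int \<Rightarrow> nat \<Rightarrow> real" where
  "walk_mgf w l tau i s = (\<Sum>y\<in>walk_range M i s. walk_law w M tau i s y * exp (l * of_int (y - i)))"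

lemma borel_measurable_walk_mgf: "(\<lambda>w. walk_mgf w l tau i s) \<in> borel_measurable Penv"
  unfolding walk_mgf_def by (intro borel_measurable_sum borel_measurable_times borel_measurable_walk_law[OF sets]) auto

lemma integrable_walk_law_mult:
  assumes "g \<in> borel_measurable Penv" and "\<And>w. \<bar>g w\<bar> \<le> 1"
  shows "integrable Penv (\<lambda>w. walk_law w M tau i s x * g w)"
proof (rule Penv.integrable_const_bound[where B = "(2 * real_of_int M + 1) ^ s"])
  have "\<bar>walk_law w M tau i s x * g w\<bar> \<le> (2 * real_of_int M + 1) ^ s * 1" for w
    unfolding abs_mult using walk_law_le[OF M_nonneg] walk_law_nonneg assms(2) M_nonneg
    by (intro mult_mono) auto
  then show "AE w in Penv. norm (walk_law w M tau i s x * g w) \<le> (2 * real_of_int M + 1) ^ s"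
    by simp
qed (use assms(1) borel_measurable_walk_law[OF sets] in simp)

text \<open>The step from \<open>x\<close> at time \<open>tau - s\<close> uses a fresh site of the environment, independent of
  the first \<open>s\<close> steps.\<close>
lemma integral_walk_law_mult_clamp01:
  "(\<integral>w. walk_law w M tau i s x * clamp01 (w (x, tau - int s) j) \<partial>Penv) =
     (\<integral>w. walk_law w M tau i s x \<partial>Penv) * envp \<mu> j"
proof -
  have "(\<integral>w. walk_law w M tau i s x * clamp01 (w (x, tau - int s) j) \<partial>Penv) =
     (\<integral>w. walk_law w M tau i s x \<partial>Penv) * (\<integral>w. clamp01 (w (x, tau - int s) j) \<partial>Penv)"
  proof (rule integral_mult_disjoint_coordinates[OF prob, where A = "{k. tau - int s < snd k \<and> snd k \<le> tau}"
        and B = "{(x, tau - int s)}"])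
    show "\<bar>walk_law w M tau i s x\<bar> \<le> (2 * real_of_int M + 1) ^ s" for w
      using walk_law_le[OF M_nonneg] walk_law_nonneg by simp
    show "\<bar>clamp01 (w (x, tau - int s) j)\<bar> \<le> 1" for w
      using clamp01_nonneg clamp01_le_1 by simp
    show "walk_law w M tau i s x = walk_law w' M tau i s x"
      if "\<And>k. k \<in> {k. tau - int s < snd k \<and> snd k \<le> tau} \<Longrightarrow> w k = w' k" for w w'
      using that by (intro walk_law_cong) auto
    show "(\<lambda>w. clamp01 (w (x, tau - int s) j)) \<in> borel_measurable Penv"
      using measurable_compose[OF measurable_env_entry[OF sets] borel_measurable_clamp01] by simp
  qed (auto simp: borel_measurable_walk_law[OF sets])
  then show ?thesis
    by (simp add: integral_PiM_component[OF prob borel_measurable_clamp01_entry] envp_eq_integral_clamp01)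
qed

lemma integral_walk_mgf: "(\<integral>w. walk_mgf w l tau i s \<partial>Penv) = step_mgf l ^ s"
proof (induction s)
  case 0
  then show ?case by (simp add: walk_mgf_def walk_range_def Penv.prob_space)
next
  case (Suc s)
  let ?law = "\<lambda>x w. walk_law w M tau i s x" and ?k = "\<lambda>x j w. clamp01 (w (x, tau - int s) j)"
  have clamp_meas: "?k x j \<in> borel_measurable Penv" for x j
    using measurable_compose[OF measurable_env_entry[OF sets] borel_measurable_clamp01] by simp
  have int_law: "integrable Penv (?law x)" for x
    using integrable_walk_law_mult[of "\<lambda>_. 1"] by simp
  have int_law_k: "integrable Penv (\<lambda>w. ?law x w * ?k x j w)" for x j
    by (rule integrable_walk_law_mult[OF clamp_meas]) (simp add: clamp01_nonneg clamp01_le_1)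
  have "walk_mgf w l tau i (Suc s) =
      (\<Sum>j\<in>{-M..M}. \<Sum>x\<in>walk_range M i s. exp (l * of_int (x - i)) * exp (l * of_int j) * (?law x w * ?k x j w))"
    for w unfolding walk_mgf_def sum_walk_law_Suc[OF M_nonneg]
    by (intro sum.cong refl) (simp add: algebra_simps flip: exp_add)
  then have "(\<integral>w. walk_mgf w l tau i (Suc s) \<partial>Penv) =
      (\<Sum>j\<in>{-M..M}. \<Sum>x\<in>walk_range M i s.
          exp (l * of_int (x - i)) * exp (l * of_int j) * ((\<integral>w. ?law x w \<partial>Penv) * envp \<mu> j))"
    by (simp add: int_law_k integral_walk_law_mult_clamp01 del: walk_law.simps)
  also have "\<dots> = step_mgf l * (\<Sum>x\<in>walk_range M i s. exp (l * of_int (x - i)) * (\<integral>w. ?law x w \<partial>Penv))"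
    unfolding step_mgf_def sum_distrib_right by (intro sum.cong refl) (simp add: sum_distrib_left ac_simps)
  also have "(\<Sum>x\<in>walk_range M i s. exp (l * of_int (x - i)) * (\<integral>w. ?law x w \<partial>Penv)) =
      (\<integral>w. walk_mgf w l tau i s \<partial>Penv)"
    unfolding walk_mgf_def by (simp add: int_law mult.commute)
  finally show ?case using Suc by simp
qed

end

lemma exp_le_1_plus_quadratic:
  fixes z a :: real
  assumes "\<bar>z\<bar> \<le> a"
  shows "exp z \<le> 1 + z + exp a * z\<^sup>2"
proof -
  obtain t where t: "\<bar>t\<bar> \<le> \<bar>z\<bar>" "exp z = (\<Sum>m<2. z ^ m / fact m) + exp t / fact 2 * z\<^sup>2"
    using Maclaurin_exp_le[of z 2] by blast
  then have "exp z = 1 + z + exp t / 2 * z\<^sup>2"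
    by (simp add: lessThan_nat_numeral)
  moreover have "exp t \<le> exp a"
    using t(1) assms by simp
  then have "exp t / 2 \<le> exp a"
    using exp_gt_zero[of t] by linarith
  then have "exp t / 2 * z\<^sup>2 \<le> exp a * z\<^sup>2"
    by (rule mult_right_mono) simp
  ultimately show ?thesis
    by simp
qed

context iid_env
begin

abbreviation drift :: real where
  "drift \<equiv> envV \<mu> M"

definition mgf_const :: real where
  "mgf_const = 4 * (real_of_int M)\<^sup>2 * exp (2 * real_of_int M)"

lemma mgf_const_nonneg: "0 \<le> mgf_const"
  by (simp add: mgf_const_def)

lemma centred_step_mgf_le:
  assumes "\<bar>l\<bar> \<le> 1"
  shows "exp (- l * drift) * step_mgf l \<le> 1 + mgf_const * l\<^sup>2"
proof -
  have step_le: "exp (l * (of_int j - drift)) \<le> 1 + l * (of_int j - drift) + mgf_const * l\<^sup>2"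
    if "j \<in> {-M..M}" for j
  proof -
    have jV: "\<bar>of_int j - drift\<bar> \<le> 2 * real_of_int M"
      using abs_envV_le that by auto
    then have "\<bar>l\<bar> * \<bar>of_int j - drift\<bar> \<le> 1 * (2 * real_of_int M)"
      using assms by (intro mult_mono) auto
    then have z: "\<bar>l * (of_int j - drift)\<bar> \<le> 2 * real_of_int M"
      by (simp add: abs_mult)
    have "(of_int j - drift)\<^sup>2 \<le> (2 * real_of_int M)\<^sup>2"
      using jV by (metis abs_le_square_iff abs_of_nonneg abs_ge_zero order_trans)
    then have "exp (2 * real_of_int M) * (l * (of_int j - drift))\<^sup>2 \<le>
        exp (2 * real_of_int M) * (l\<^sup>2 * (2 * real_of_int M)\<^sup>2)"
      unfolding power_mult_distrib[of l] by (intro mult_left_mono) auto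
    also have "\<dots> = mgf_const * l\<^sup>2"
      by (simp add: mgf_const_def power_mult_distrib)
    finally have "exp (2 * real_of_int M) * (l * (of_int j - drift))\<^sup>2 \<le> mgf_const * l\<^sup>2" .
    with exp_le_1_plus_quadratic[OF z] show ?thesis by linarith
  qed
  have "exp (- l * drift) * step_mgf l = (\<Sum>j\<in>{-M..M}. envp \<mu> j * exp (l * (of_int j - drift)))"
    unfolding step_mgf_def sum_distrib_left by (rule sum.cong[OF refl]) (simp add: algebra_simps flip: exp_add)
  also have "\<dots> \<le> (\<Sum>j\<in>{-M..M}. envp \<mu> j * (1 + l * (of_int j - drift) + mgf_const * l\<^sup>2))"
    by (intro sum_mono mult_left_mono envp_nonneg step_le)
  also have "\<dots> = (\<Sum>j\<in>{-M..M}. envp \<mu> j * (1 - l * drift + mgf_const * l\<^sup>2) + l * (of_int j * envp \<mu> j))"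
    by (rule sum.cong[OF refl]) (simp add: algebra_simps)
  also have "\<dots> = (\<Sum>j\<in>{-M..M}. envp \<mu> j) * (1 - l * drift + mgf_const * l\<^sup>2)
      + l * (\<Sum>j\<in>{-M..M}. of_int j * envp \<mu> j)"
    by (simp only: sum.distrib sum_distrib_left sum_distrib_right)
  also have "\<dots> = 1 + mgf_const * l\<^sup>2"
    by (simp add: sum_envp envV_def[symmetric])
  finally show ?thesis .
qed

definition two_sided_mgf :: "env \<Rightarrow> real \<Rightarrow> int \<Rightarrow> int \<Rightarrow> nat \<Rightarrow> real" where
  "two_sided_mgf w l tau i s = (\<Sum>y\<in>walk_range M i s. walk_law w M tau i s y *
      (exp (l * (of_int y - (of_int i + real s * drift))) + exp (- l * (of_int y - (of_int i + real s * drift)))))"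

lemma two_sided_mgf_nonneg: "0 \<le> two_sided_mgf w l tau i s"
  unfolding two_sided_mgf_def by (intro sum_nonneg mult_nonneg_nonneg walk_law_nonneg) auto

lemma two_sided_mgf_eq_walk_mgf:
  "two_sided_mgf w l tau i s =
     exp (- l * real s * drift) * walk_mgf w l tau i s + exp (l * real s * drift) * walk_mgf w (- l) tau i s"
  unfolding two_sided_mgf_def walk_mgf_def sum_distrib_left sum.distrib[symmetric]
  by (rule sum.cong[OF refl]) (simp add: algebra_simps flip: exp_add)

lemma integrable_walk_mgf: "integrable Penv (\<lambda>w. walk_mgf w l tau i s)"
  unfolding walk_mgf_def using integrable_walk_law_mult[of "\<lambda>_. 1"] by simp

lemma borel_measurable_two_sided_mgf: "(\<lambda>w. two_sided_mgf w l tau i s) \<in> borel_measurable Penv"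
  unfolding two_sided_mgf_eq_walk_mgf by (intro borel_measurable_add borel_measurable_times borel_measurable_walk_mgf) auto

lemma integrable_two_sided_mgf: "integrable Penv (\<lambda>w. two_sided_mgf w l tau i s)"
  unfolding two_sided_mgf_eq_walk_mgf by (intro Bochner_Integration.integrable_add integrable_mult_right integrable_walk_mgf)

lemma integral_two_sided_mgf_le:
  assumes "\<bar>l\<bar> \<le> 1"
  shows "(\<integral>w. two_sided_mgf w l tau i s \<partial>Penv) \<le> 2 * exp (mgf_const * l\<^sup>2 * real s)"
proof -
  have "(\<integral>w. two_sided_mgf w l tau i s \<partial>Penv) =
      (exp (- l * drift) * step_mgf l) ^ s + (exp (- (- l) * drift) * step_mgf (- l)) ^ s"
    unfolding two_sided_mgf_eq_walk_mgf
    by (simp add: integrable_walk_mgf integral_walk_mgf power_mult_distrib flip: exp_of_nat_mult)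
      (simp add: ac_simps)
  also have "\<dots> \<le> (1 + mgf_const * l\<^sup>2) ^ s + (1 + mgf_const * (- l)\<^sup>2) ^ s"
    using assms by (intro add_mono power_mono centred_step_mgf_le)
      (auto simp: step_mgf_def envp_nonneg intro!: sum_nonneg mult_nonneg_nonneg)
  also have "\<dots> \<le> 2 * exp (mgf_const * l\<^sup>2) ^ s"
    using mgf_const_nonneg by (simp add: power_mono)
  finally show ?thesis
    by (simp flip: exp_of_nat_mult add: ac_simps)
qed

end

section \<open>Almost sure control of the quenched moments\<close>

definition tilt :: "nat \<Rightarrow> real" where
  "tilt n = 1 / sqrt (real n)"

text \<open>The factor 6 makes \<open>exp (- tilt n * window n) = n\<^sup>-\<^sup>6\<close>, which beats the bound \<open>n\<^sup>4\<close>
  on the quenched moments by \<open>n\<^sup>-\<^sup>2\<close>.\<close>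
definition window :: "nat \<Rightarrow> real" where
  "window n = 6 * sqrt (real n) * ln (real n)"

lemma exp_tilt_window:
  assumes "n \<ge> 1"
  shows "exp (- tilt n * window n) = 1 / real n ^ 6"
proof -
  have "exp (- tilt n * window n) = inverse (exp (6 * ln (real n)))"
    using assms by (simp add: tilt_def window_def exp_minus)
  also have "exp (6 * ln (real n)) = real n powr 6"
    using assms by (simp add: powr_def)
  also have "\<dots> = real n ^ 6"
    using assms by (simp add: powr_numeral)
  finally show ?thesis by (simp add: inverse_eq_divide)
qed

context iid_env
begin

definition max_time :: "real \<Rightarrow> nat \<Rightarrow> nat" where
  "max_time T n = nat \<lfloor>real n * T\<rfloor>"

definition max_start :: "real \<Rightarrow> real \<Rightarrow> real \<Rightarrow> nat \<Rightarrow> int" where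
  "max_start ybar S T n = \<lceil>\<bar>real n * ybar\<bar> + S * sqrt (real n) + real n * T * \<bar>drift\<bar> + 3\<rceil>"

definition bad_event :: "real \<Rightarrow> real \<Rightarrow> real \<Rightarrow> nat \<Rightarrow> env set" where
  "bad_event ybar S T n =
     (\<Union>s\<in>{..max_time T n}. \<Union>i\<in>{- max_start ybar S T n .. max_start ybar S T n}.
        {w \<in> space Penv. real n ^ 4 \<le> two_sided_mgf w (tilt n) (int s) i s})"

lemma sets_two_sided_mgf_ge: "{w \<in> space Penv. c \<le> two_sided_mgf w l tau i s} \<in> sets Penv"
  using borel_measurable_two_sided_mgf[of l tau i s] by measurable

lemma real_max_time_le:
  assumes "T \<ge> 0"
  shows "real (max_time T n) \<le> real n * T"
  using assms by (simp add: max_time_def)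

lemma measure_two_sided_mgf_ge_le:
  assumes n: "n \<ge> 1" and "T \<ge> 0" and "s \<le> max_time T n"
  shows "measure Penv {w \<in> space Penv. real n ^ 4 \<le> two_sided_mgf w (tilt n) tau i s}
    \<le> 2 * exp (mgf_const * T) / real n ^ 4"
proof -
  have "measure Penv {w \<in> space Penv. real n ^ 4 \<le> two_sided_mgf w (tilt n) tau i s}
      \<le> (\<integral>w. two_sided_mgf w (tilt n) tau i s \<partial>Penv) / real n ^ 4"
    using n by (intro integral_Markov_inequality_measure[OF integrable_two_sided_mgf, where A = "space Penv"])
      (auto simp: two_sided_mgf_nonneg)
  also have "\<dots> \<le> 2 * exp (mgf_const * (tilt n)\<^sup>2 * real s) / real n ^ 4"
    using n by (intro divide_right_mono integral_two_sided_mgf_le) (auto simp: tilt_def)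
  also have "\<dots> \<le> 2 * exp (mgf_const * T) / real n ^ 4"
  proof -
    have "real s \<le> real n * T"
      using real_max_time_le[OF assms(2), of n] assms(3) by linarith
    then have "(tilt n)\<^sup>2 * real s \<le> T"
      using n by (simp add: tilt_def power_divide field_simps)
    then show ?thesis
      using mgf_const_nonneg by (simp add: divide_right_mono mult_left_mono mult.assoc)
  qed
  finally show ?thesis .
qed

definition count_const :: "real \<Rightarrow> real \<Rightarrow> real \<Rightarrow> real" where
  "count_const ybar S T = (T + 1) * (2 * \<bar>ybar\<bar> + 2 * S + 2 * T * \<bar>drift\<bar> + 9)"

lemma max_start_nonneg:
  assumes "S \<ge> 0" and "T \<ge> 0"
  shows "0 \<le> max_start ybar S T n"
proof -
  have "0 \<le> \<bar>real n * ybar\<bar> + S * sqrt (real n) + real n * T * \<bar>drift\<bar>"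
    using assms by (intro add_nonneg_nonneg mult_nonneg_nonneg) auto
  then show ?thesis by (simp add: max_start_def)
qed

lemma card_bad_indices_le:
  assumes n: "n \<ge> 1" and S: "S \<ge> 0" and T: "T \<ge> 0"
  shows "real (max_time T n + 1) * (2 * of_int (max_start ybar S T n) + 1) \<le> count_const ybar S T * real n ^ 2"
proof -
  have n1: "1 \<le> real n" using n by simp
  have "sqrt (real n) * 1 \<le> sqrt (real n) * sqrt (real n)"
    using n1 by (intro mult_left_mono) auto
  then have "S * sqrt (real n) \<le> S * real n"
    using S by (intro mult_left_mono) auto
  then have "2 * of_int (max_start ybar S T n) + 1 \<le> real n * (2 * \<bar>ybar\<bar> + 2 * S + 2 * T * \<bar>drift\<bar> + 9)"
    unfolding max_start_def using n1 by (simp add: abs_mult algebra_simps) linarith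
  moreover have "real (max_time T n + 1) \<le> real n * (T + 1)"
    using real_max_time_le[OF T, of n] n1 by (simp add: algebra_simps)
  ultimately have "real (max_time T n + 1) * (2 * of_int (max_start ybar S T n) + 1) \<le>
      (real n * (T + 1)) * (real n * (2 * \<bar>ybar\<bar> + 2 * S + 2 * T * \<bar>drift\<bar> + 9))"
    using max_start_nonneg[OF S T, of ybar n] by (intro mult_mono) auto
  then show ?thesis by (simp add: count_const_def power2_eq_square algebra_simps)
qed

lemma measure_bad_event_le:
  assumes n: "n \<ge> 1" and S: "S \<ge> 0" and T: "T \<ge> 0"
  shows "measure Penv (bad_event ybar S T n) \<le> count_const ybar S T * (2 * exp (mgf_const * T)) / real n ^ 2"
proof -
  let ?c = "2 * exp (mgf_const * T) / real n ^ 4"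
  let ?I = "{- max_start ybar S T n .. max_start ybar S T n}"
  have "measure Penv (bad_event ybar S T n) \<le> (\<Sum>s\<in>{..max_time T n}. \<Sum>i\<in>?I.
      measure Penv {w \<in> space Penv. real n ^ 4 \<le> two_sided_mgf w (tilt n) (int s) i s})"
    unfolding bad_event_def
    by (intro order_trans[OF measure_UNION_le] sum_mono measure_UNION_le)
      (auto intro!: sets.finite_UN sets_two_sided_mgf_ge)
  also have "\<dots> \<le> (\<Sum>s\<in>{..max_time T n}. \<Sum>i\<in>?I. ?c)"
    by (intro sum_mono measure_two_sided_mgf_ge_le n T) auto
  also have "\<dots> = real (max_time T n + 1) * (2 * of_int (max_start ybar S T n) + 1) * ?c"
    using max_start_nonneg[OF S T, of ybar n] by simp
  also have "\<dots> \<le> count_const ybar S T * real n ^ 2 * ?c"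
    by (intro mult_right_mono card_bad_indices_le n S T) auto
  also have "\<dots> = count_const ybar S T * (2 * exp (mgf_const * T)) / real n ^ 2"
    using n by (simp add: field_simps power2_eq_square eval_nat_numeral)
  finally show ?thesis .
qed

definition mgf_controlled :: "real \<Rightarrow> real \<Rightarrow> real \<Rightarrow> nat \<Rightarrow> env \<Rightarrow> bool" where
  "mgf_controlled ybar S T n w \<longleftrightarrow>
     (\<forall>s\<le>max_time T n. \<forall>i\<in>{- max_start ybar S T n .. max_start ybar S T n}.
        two_sided_mgf w (tilt n) (int s) i s < real n ^ 4)"

lemma AE_eventually_mgf_controlled:
  assumes "S \<ge> 0" and "T \<ge> 0"
  shows "AE w in Penv. eventually (\<lambda>n. mgf_controlled ybar S T n w) sequentially"
proof -
  have "AE w in Penv. eventually (\<lambda>n. w \<in> space Penv - bad_event ybar S T n) sequentially"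
  proof (rule borel_cantelli_AE1)
    show "bad_event ybar S T n \<in> sets Penv" for n
      unfolding bad_event_def by (auto intro!: sets.finite_UN sets_two_sided_mgf_ge)
    show "emeasure Penv (bad_event ybar S T n) < \<infinity>" for n
      by (simp add: Penv.emeasure_finite less_top[symmetric])
    show "summable (\<lambda>n. measure Penv (bad_event ybar S T n))"
    proof (rule summable_comparison_test')
      show "summable (\<lambda>n. count_const ybar S T * (2 * exp (mgf_const * T)) * inverse (real n ^ 2))"
        by (intro summable_mult inverse_power_summable) simp
      show "norm (measure Penv (bad_event ybar S T n)) \<le>
          count_const ybar S T * (2 * exp (mgf_const * T)) * inverse (real n ^ 2)" if "n \<ge> 1" for n
        using measure_bad_event_le[OF that assms] by (simp add: divide_inverse)
    qed
  qed
  then show ?thesis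
    by (rule AE_mp) (auto elim!: eventually_mono simp: bad_event_def mgf_controlled_def not_le)
qed

end

section \<open>Crossing weights\<close>

definition crossing_weight :: "(int set \<Rightarrow> real) \<Rightarrow> int \<Rightarrow> int \<Rightarrow> real" where
  "crossing_weight P x i = (if x < i then P {i..} else 0) - (if i \<le> x then P {..<i} else 0)"

lemma sum_indicator_between:
  fixes x y K :: int
  assumes "\<bar>y - x\<bar> \<le> K"
  shows "(\<Sum>i\<in>{x - K..x + K}. (if x < i \<and> i \<le> y then 1 else 0) - (if y < i \<and> i \<le> x then 1 else 0) :: real)
    = of_int (y - x)"
proof -
  have "{i \<in> {x - K..x + K}. x < i \<and> i \<le> y} = {x<..y}" "{i \<in> {x - K..x + K}. y < i \<and> i \<le> x} = {y<..x}"
    using assms by auto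
  then show ?thesis
    unfolding sum_subtractf by (simp flip: sum.inter_filter)
qed

lemma sum_crossing_weight:
  fixes q :: "int \<Rightarrow> real"
  assumes R: "R \<subseteq> {x - K..x + K}"
  shows "(\<Sum>i\<in>{x - K..x + K}. crossing_weight (\<lambda>A. \<Sum>y\<in>A \<inter> R. q y) x i) = (\<Sum>y\<in>R. of_int (y - x) * q y)"
proof -
  have fR: "finite R" using R finite_subset by blast
  have "crossing_weight (\<lambda>A. \<Sum>y\<in>A \<inter> R. q y) x i =
      (\<Sum>y\<in>R. q y * ((if x < i \<and> i \<le> y then 1 else 0) - (if y < i \<and> i \<le> x then 1 else 0)))" for i
    unfolding crossing_weight_def
    by (simp add: fR sum.inter_restrict Int_commute[of _ R] sum_negf[symmetric] if_distrib
        cong: if_cong) (auto intro!: sum.cong)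
  then have "(\<Sum>i\<in>{x - K..x + K}. crossing_weight (\<lambda>A. \<Sum>y\<in>A \<inter> R. q y) x i) =
      (\<Sum>y\<in>R. q y * (\<Sum>i\<in>{x - K..x + K}. (if x < i \<and> i \<le> y then 1 else 0) - (if y < i \<and> i \<le> x then 1 else 0)))"
    by (simp add: sum_distrib_left sum.swap[of _ R])
  also have "\<dots> = (\<Sum>y\<in>R. q y * of_int (y - x))"
  proof (intro sum.cong refl)
    fix y assume "y \<in> R"
    then have "\<bar>y - x\<bar> \<le> K" using R by (auto simp: abs_le_iff)
    then show "q y * (\<Sum>i\<in>{x - K..x + K}. (if x < i \<and> i \<le> y then 1 else 0) - (if y < i \<and> i \<le> x then 1 else 0))
        = q y * of_int (y - x)"
      by (simp only: sum_indicator_between)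
  qed
  finally show ?thesis by (simp add: mult.commute)
qed

lemma crossing_weight_eq_0:
  assumes "R \<subseteq> {x - K..x + K}" and "i \<notin> {x - K..x + K}"
  shows "crossing_weight (\<lambda>A. \<Sum>y\<in>A \<inter> R. q y) x i = 0"
proof -
  have "{i..} \<inter> R = {}" if "x < i" using that assms by auto
  moreover have "{..<i} \<inter> R = {}" if "i \<le> x" using that assms by auto
  ultimately show ?thesis by (simp add: crossing_weight_def)
qed

lemma abs_crossing_weight_le_sum:
  assumes "finite R" and "\<And>y. 0 \<le> q y"
    and "\<And>y. y \<in> R \<Longrightarrow> x < i \<Longrightarrow> i \<le> y \<Longrightarrow> y \<in> F" and "\<And>y. y \<in> R \<Longrightarrow> i \<le> x \<Longrightarrow> y < i \<Longrightarrow> y \<in> F"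
  shows "\<bar>crossing_weight (\<lambda>A. \<Sum>y\<in>A \<inter> R. q y) x i\<bar> \<le> (\<Sum>y\<in>F \<inter> R. q y)"
proof -
  have "(\<Sum>y\<in>A \<inter> R. q y) \<le> (\<Sum>y\<in>F \<inter> R. q y)" if "A \<inter> R \<subseteq> F" for A
    using that assms(1,2) by (intro sum_mono2) auto
  moreover have "{i..} \<inter> R \<subseteq> F" if "x < i" using that assms(3) by auto
  moreover have "{..<i} \<inter> R \<subseteq> F" if "i \<le> x" using that assms(4) by auto
  ultimately show ?thesis
    using assms(2) by (auto simp: crossing_weight_def sum_nonneg)
qed

lemma abs_crossing_weight_le_1:
  assumes "finite R" and "\<And>y. 0 \<le> q y" and "(\<Sum>y\<in>R. q y) = 1"
  shows "\<bar>crossing_weight (\<lambda>A. \<Sum>y\<in>A \<inter> R. q y) x i\<bar> \<le> 1"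
  using abs_crossing_weight_le_sum[where R = R and q = q and F = UNIV] assms by simp

lemma abs_crossing_weight_far:
  fixes c L :: real
  assumes "finite R" and "\<And>y. 0 \<le> q y"
    and "\<bar>c - of_int x\<bar> \<le> L" and "L < \<bar>of_int i - c\<bar>"
  shows "\<bar>crossing_weight (\<lambda>A. \<Sum>y\<in>A \<inter> R. q y) x i\<bar> \<le> (\<Sum>y\<in>{y. L \<le> \<bar>of_int y - c\<bar>} \<inter> R. q y)"
  using assms by (intro abs_crossing_weight_le_sum) (auto simp: abs_if split: if_splits)

lemma exp_le_exp_plus_exp_neg:
  fixes l L z :: real
  assumes "0 \<le> l" and "L \<le> \<bar>z\<bar>"
  shows "exp (l * L) \<le> exp (l * z) + exp (- l * z)"
proof -
  have "l * L \<le> l * \<bar>z\<bar>"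
    using assms by (intro mult_left_mono) auto
  moreover have "exp (l * \<bar>z\<bar>) \<le> exp (l * z) + exp (- l * z)"
    by (cases "0 \<le> z") auto
  ultimately show ?thesis
    by (meson exp_le_cancel_iff order_trans)
qed

lemma sum_far_le_exp:
  fixes c l L :: real
  assumes "finite R" and "\<And>y. 0 \<le> q y" and "0 \<le> l"
  shows "(\<Sum>y\<in>{y. L \<le> \<bar>of_int y - c\<bar>} \<inter> R. q y) \<le>
    (\<Sum>y\<in>R. q y * (exp (l * (of_int y - c)) + exp (- l * (of_int y - c)))) * exp (- l * L)"
proof -
  have "q y \<le> q y * (exp (l * (of_int y - c)) + exp (- l * (of_int y - c))) * exp (- l * L)"
    if "L \<le> \<bar>of_int y - c\<bar>" for y
  proof -
    have "exp (l * L) * exp (- l * L) \<le> (exp (l * (of_int y - c)) + exp (- l * (of_int y - c))) * exp (- l * L)"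
      using exp_le_exp_plus_exp_neg[OF assms(3) that] by (intro mult_right_mono) auto
    then show ?thesis
      using assms(2)[of y] by (simp add: mult_le_cancel_left1 mult.assoc flip: exp_add)
  qed
  then have "(\<Sum>y\<in>{y. L \<le> \<bar>of_int y - c\<bar>} \<inter> R. q y) \<le>
      (\<Sum>y\<in>{y. L \<le> \<bar>of_int y - c\<bar>} \<inter> R. q y * (exp (l * (of_int y - c)) + exp (- l * (of_int y - c))) * exp (- l * L))"
    by (intro sum_mono) auto
  also have "\<dots> \<le> (\<Sum>y\<in>R. q y * (exp (l * (of_int y - c)) + exp (- l * (of_int y - c))) * exp (- l * L))"
    using assms by (intro sum_mono2) (auto intro!: mult_nonneg_nonneg add_nonneg_nonneg)
  finally show ?thesis by (simp add: sum_distrib_right)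
qed

lemma abs_floor_sub_le: "\<bar>real_of_int \<lfloor>z\<rfloor> - z\<bar> \<le> 1"
  by (smt (verit) of_int_floor_le real_of_int_floor_add_one_gt)

lemma abs_xnr_sub_le:
  assumes "\<bar>r\<bar> \<le> S"
  shows "\<bar>real_of_int (xnr ybar n r) - real n * ybar\<bar> \<le> S * sqrt (real n) + 2"
proof -
  have "\<bar>r * sqrt (real n)\<bar> \<le> S * sqrt (real n)"
    using assms by (simp add: abs_mult mult_right_mono)
  then show ?thesis
    using abs_floor_sub_le[of "real n * ybar"] abs_floor_sub_le[of "r * sqrt (real n)"]
    unfolding xnr_def by (simp add: abs_le_iff) linarith
qed

lemma abs_start_sub_xnr_le:
  assumes "0 \<le> t" and "t \<le> T"
  shows "\<bar>real_of_int (start b ybar n t r - xnr ybar n r)\<bar> \<le> real n * T * \<bar>b\<bar> + 1"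
proof -
  have "\<bar>real n * t * b\<bar> \<le> real n * T * \<bar>b\<bar>"
    using assms by (simp add: abs_mult mult_left_mono mult_right_mono)
  then show ?thesis
    using abs_floor_sub_le[of "real n * t * b"] by (simp add: start_def abs_le_iff) linarith
qed

text \<open>The annealed centre \<open>X\<^sub>0 + s V\<close> of the walk stays within \<open>1 + \<bar>V\<bar>\<close> of \<open>x\<^sub>n\<^sub>,\<^sub>r\<close>,
  because the starting point was shifted by \<open>\<lfloor>n t b\<rfloor>\<close> with \<open>b = -V\<close>.\<close>
lemma abs_centre_sub_xnr_le:
  assumes "0 \<le> t"
  shows "\<bar>real_of_int (start (- V) ybar n t r) + real (nat (tlab n t)) * V - real_of_int (xnr ybar n r)\<bar>
    \<le> 1 + \<bar>V\<bar>"
proof -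
  have "real (nat (tlab n t)) = real_of_int \<lfloor>real n * t\<rfloor>"
    using assms by (simp add: tlab_def)
  then have "\<bar>real (nat (tlab n t)) - real n * t\<bar> * \<bar>V\<bar> \<le> 1 * \<bar>V\<bar>"
    using abs_floor_sub_le[of "real n * t"] by (intro mult_right_mono) auto
  then have "\<bar>real (nat (tlab n t)) * V - real n * t * V\<bar> \<le> \<bar>V\<bar>"
    by (simp add: abs_mult flip: left_diff_distrib)
  then show ?thesis
    using abs_floor_sub_le[of "real n * t * - V"] by (simp add: start_def abs_le_iff)
qed

lemma card_near_le:
  fixes c L :: real
  assumes "0 \<le> L"
  shows "real (card {i \<in> I. \<bar>of_int i - c\<bar> \<le> L}) \<le> 2 * L + 1"
proof -
  have "card {i \<in> I. \<bar>of_int i - c\<bar> \<le> L} \<le> card {\<lceil>c - L\<rceil>..\<lfloor>c + L\<rfloor>}"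
    by (rule card_mono) (auto simp: abs_le_iff ceiling_le_iff le_floor_iff)
  moreover have "real (card {\<lceil>c - L\<rceil>..\<lfloor>c + L\<rfloor>}) \<le> 2 * L + 1"
  proof -
    have "real_of_int (\<lfloor>c + L\<rfloor> + 1 - \<lceil>c - L\<rceil>) \<le> 2 * L + 1"
      using of_int_floor_le[of "c + L"] le_of_int_ceiling[of "c - L"] by simp linarith
    then show ?thesis
      using assms by (simp add: max_def)
  qed
  ultimately show ?thesis
    by (meson of_nat_le_iff order_trans)
qed

lemma abs_sum_mult_window_le:
  fixes f a :: "int \<Rightarrow> real" and c L E1 E2 \<epsilon> :: real
  assumes "finite I" and "0 \<le> L" and "0 \<le> E1" and "0 \<le> E2" and "0 \<le> \<epsilon>"
    and "\<And>i. \<bar>a i\<bar> \<le> 1" and "\<And>i. L < \<bar>of_int i - c\<bar> \<Longrightarrow> \<bar>a i\<bar> \<le> \<epsilon>"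
    and "\<And>i. \<bar>of_int i - c\<bar> \<le> L \<Longrightarrow> \<bar>f i\<bar> \<le> E1" and "\<And>i. \<bar>f i\<bar> \<le> E2"
  shows "\<bar>\<Sum>i\<in>I. f i * a i\<bar> \<le> (2 * L + 1) * E1 + real (card I) * (E2 * \<epsilon>)"
proof -
  let ?near = "\<lambda>i. \<bar>of_int i - c\<bar> \<le> L"
  have "\<bar>f i * a i\<bar> \<le> (if ?near i then E1 else E2 * \<epsilon>)" for i
  proof (cases "?near i")
    case True
    then have "\<bar>f i\<bar> * \<bar>a i\<bar> \<le> E1 * 1"
      using assms(3,6,8) by (intro mult_mono) auto
    then show ?thesis using True by (simp add: abs_mult)
  next
    case False
    then have "\<bar>f i\<bar> * \<bar>a i\<bar> \<le> E2 * \<epsilon>"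
      using assms(4,7,9) by (intro mult_mono) auto
    then show ?thesis using False by (simp add: abs_mult)
  qed
  then have "\<bar>\<Sum>i\<in>I. f i * a i\<bar> \<le> (\<Sum>i\<in>I. if ?near i then E1 else E2 * \<epsilon>)"
    by (intro order_trans[OF sum_abs sum_mono])
  also have "\<dots> = real (card {i \<in> I. ?near i}) * E1 + real (card (I - {i. ?near i})) * (E2 * \<epsilon>)"
    using assms(1) by (simp add: sum.If_cases Int_def set_diff_eq)
  also have "\<dots> \<le> (2 * L + 1) * E1 + real (card I) * (E2 * \<epsilon>)"
    using assms(1-5) card_near_le[OF assms(2), of I c]
    by (intro add_mono mult_right_mono) (auto intro: card_mono)
  finally show ?thesis .
qed

lemma Hn_minus_EXc_eq_sum:
  fixes w :: env and \<rho> :: "real \<Rightarrow> real" and b ybar t r :: real and n :: nat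
  assumes "M \<ge> 0" and "probvec_env M w"
  defines "x \<equiv> xnr ybar n r" and "i0 \<equiv> start b ybar n t r" and "s \<equiv> nat (tlab n t)"
  defines "K \<equiv> \<bar>x - i0\<bar> + M * int s"
  shows "Hn \<rho> w b ybar n t r - \<rho> ybar * EXc w b ybar n t r =
    (\<Sum>i\<in>{x - K..x + K}. (\<rho> (of_int i / real n) - \<rho> ybar) * crossing_weight (qP w (tlab n t) i0 s) x i)"
proof -
  let ?q = "walk_law w M (tlab n t) i0 s" and ?R = "walk_range M i0 s"
  have P: "qP w (tlab n t) i0 s = (\<lambda>A. \<Sum>y\<in>A \<inter> ?R. ?q y)"
    using qP_eq_sum_walk_law[OF assms(1,2)] by blast
  have R: "?R \<subseteq> {x - K..x + K}"
    by (auto simp: walk_range_def K_def abs_le_iff)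
  have "Hn \<rho> w b ybar n t r = (\<Sum>\<^sub>\<infinity>i. \<rho> (of_int i / real n) * crossing_weight (qP w (tlab n t) i0 s) x i)"
    unfolding Hn_def crossing_weight_def Let_def x_def i0_def s_def by simp
  also have "\<dots> = (\<Sum>i\<in>{x - K..x + K}. \<rho> (of_int i / real n) * crossing_weight (qP w (tlab n t) i0 s) x i)"
    by (subst infsum_finite_support[where F = "{x - K..x + K}"]) (auto simp: P crossing_weight_eq_0[OF R])
  finally have H: "Hn \<rho> w b ybar n t r = \<dots>" .
  have "EXc w b ybar n t r = (\<Sum>\<^sub>\<infinity>y. of_int (y - x) * ?q y)"
    unfolding EXc_def x_def i0_def s_def qprob_eq_walk_law[OF assms(1,2)] ..
  also have "\<dots> = (\<Sum>y\<in>?R. of_int (y - x) * ?q y)"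
    by (subst infsum_finite_support[where F = ?R]) (auto simp: walk_law_outside_range[OF assms(1)])
  also have "\<dots> = (\<Sum>i\<in>{x - K..x + K}. crossing_weight (qP w (tlab n t) i0 s) x i)"
    unfolding P by (rule sum_crossing_weight[OF R, symmetric])
  finally show ?thesis
    unfolding H by (simp add: sum_distrib_left sum_subtractf left_diff_distrib)
qed

section \<open>The deviation estimate\<close>

lemma hoelder_rescaled:
  fixes \<rho> :: "real \<Rightarrow> real"
  assumes "\<And>u. \<bar>\<rho> u - \<rho> y\<bar> \<le> C * \<bar>u - y\<bar> powr \<gamma>" and "0 \<le> C" and "0 < \<gamma>"
    and "n \<ge> 1" and "\<bar>z - real n * y\<bar> \<le> Q"
  shows "\<bar>\<rho> (z / real n) - \<rho> y\<bar> \<le> C * (Q / real n) powr \<gamma>"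
proof -
  have "z / real n - y = (z - real n * y) / real n"
    using assms(4) by (simp add: field_simps)
  then have "\<bar>z / real n - y\<bar> \<le> Q / real n"
    using assms(5) by (simp add: divide_right_mono)
  then have "\<bar>z / real n - y\<bar> powr \<gamma> \<le> (Q / real n) powr \<gamma>"
    using assms(3) by (intro powr_mono2) auto
  then show ?thesis
    using assms(1)[of "z / real n"] assms(2) by (meson mult_left_mono order_trans)
qed

lemma hoelder_at_point:
  fixes \<rho> :: "real \<Rightarrow> real"
  assumes bdd: "bounded (range \<rho>)"
    and hoelder: "\<exists>\<gamma>>1/2. \<forall>a b. \<exists>C. \<forall>x\<in>{a..b}. \<forall>y\<in>{a..b}. \<bar>\<rho> x - \<rho> y\<bar> \<le> C * \<bar>x - y\<bar> powr \<gamma>"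
  obtains \<gamma> C B where "\<gamma> > 1/2" and "C \<ge> 0" and "\<And>u. \<bar>\<rho> u\<bar> \<le> B"
    and "\<And>u. \<bar>\<rho> u - \<rho> y0\<bar> \<le> C * \<bar>u - y0\<bar> powr \<gamma>"
proof -
  obtain B where B: "\<And>u. \<bar>\<rho> u\<bar> \<le> B"
    using bdd unfolding bounded_iff by auto
  obtain \<gamma> C where \<gamma>: "\<gamma> > 1/2"
    and C: "\<And>x y. x \<in> {y0 - 1..y0 + 1} \<Longrightarrow> y \<in> {y0 - 1..y0 + 1} \<Longrightarrow> \<bar>\<rho> x - \<rho> y\<bar> \<le> C * \<bar>x - y\<bar> powr \<gamma>"
    using hoelder by meson
  define C' where "C' = max C (2 * B)"
  have "\<bar>\<rho> u - \<rho> y0\<bar> \<le> C' * \<bar>u - y0\<bar> powr \<gamma>" for u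
  proof (cases "\<bar>u - y0\<bar> \<le> 1")
    case True
    then have "\<bar>\<rho> u - \<rho> y0\<bar> \<le> C * \<bar>u - y0\<bar> powr \<gamma>" by (intro C) auto
    also have "\<dots> \<le> C' * \<bar>u - y0\<bar> powr \<gamma>" by (intro mult_right_mono) (auto simp: C'_def)
    finally show ?thesis .
  next
    case False
    have "\<bar>\<rho> u - \<rho> y0\<bar> \<le> 2 * B * 1" using B[of u] B[of y0] by linarith
    also have "\<dots> \<le> 2 * B * \<bar>u - y0\<bar> powr \<gamma>"
      using False \<gamma> B[of 0] by (intro mult_left_mono ge_one_powr_ge_zero) auto
    also have "\<dots> \<le> C' * \<bar>u - y0\<bar> powr \<gamma>" by (intro mult_right_mono) (auto simp: C'_def)
    finally show ?thesis .
  qed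
  moreover have "C' \<ge> 0" using B[of 0] by (simp add: C'_def)
  ultimately show ?thesis using that \<gamma> B by blast
qed

lemma eventually_ge_window: "eventually (\<lambda>n. c \<le> window n) sequentially"
proof -
  have "filterlim window at_top sequentially"
    unfolding window_def by real_asymp
  then show ?thesis by (simp add: filterlim_at_top)
qed

lemma deviation_bound_tendsto_0:
  fixes \<gamma> C B D Q S :: real
  assumes "\<gamma> > 1/2"
  shows "(\<lambda>n. real n powr (-1/4) *
     ((2 * window n + 1) * (C * ((window n + D + S * sqrt (real n) + 2) / real n) powr \<gamma>)
      + (2 * (real n * Q + 1) + 1) * (2 * B * (1 / real n ^ 2)))) \<longlonglongrightarrow> 0"
proof -
  have "(\<lambda>n. real n powr (-1/4) * (2 * window n + 1) * ((window n + D + S * sqrt (real n) + 2) / real n) powr \<gamma>)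
      \<longlonglongrightarrow> 0"
    unfolding window_def using assms by real_asymp
  moreover have "(\<lambda>n. real n powr (-1/4) * (2 * (real n * Q + 1) + 1) / (real n)\<^sup>2) \<longlonglongrightarrow> 0"
    by real_asymp
  ultimately have "(\<lambda>n. C * (real n powr (-1/4) * (2 * window n + 1) * ((window n + D + S * sqrt (real n) + 2) / real n) powr \<gamma>)
      + 2 * B * (real n powr (-1/4) * (2 * (real n * Q + 1) + 1) / (real n)\<^sup>2)) \<longlonglongrightarrow> C * 0 + 2 * B * 0"
    by (intro tendsto_intros)
  then show ?thesis
    by (simp add: algebra_simps)
qed

lemma SUP_tendsto_0:
  fixes f :: "nat \<Rightarrow> 'a \<Rightarrow> real"
  assumes "A \<noteq> {}" and "\<And>n p. 0 \<le> f n p"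
    and "eventually (\<lambda>n. \<forall>p\<in>A. f n p \<le> g n) sequentially" and "g \<longlonglongrightarrow> 0"
  shows "(\<lambda>n. SUP p\<in>A. f n p) \<longlonglongrightarrow> 0"
proof (rule tendsto_sandwich[OF _ _ tendsto_const assms(4)])
  show "eventually (\<lambda>n. 0 \<le> (SUP p\<in>A. f n p)) sequentially"
    using assms(3)
  proof eventually_elim
    case (elim n)
    obtain p where "p \<in> A" using assms(1) by blast
    moreover have "bdd_above (f n ` A)" using elim by (auto intro: bdd_aboveI2)
    ultimately show ?case using assms(2) by (meson cSUP_upper order_trans)
  qed
  show "eventually (\<lambda>n. (SUP p\<in>A. f n p) \<le> g n) sequentially"
    using assms(3) by eventually_elim (use assms(1) in \<open>auto intro: cSUP_least\<close>)
qed

context iid_env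
begin

lemma abs_crossing_weight_far_le:
  assumes w: "probvec_env M w" "mgf_controlled ybar S T n w" and n: "n \<ge> 1"
    and s: "s \<le> max_time T n" and i0: "\<bar>i0\<bar> \<le> max_start ybar S T n"
    and x: "\<bar>of_int i0 + real s * drift - of_int x\<bar> \<le> window n"
    and i: "window n < \<bar>of_int i - (of_int i0 + real s * drift)\<bar>"
  shows "\<bar>crossing_weight (qP w (int s) i0 s) x i\<bar> \<le> 1 / real n ^ 2"
proof -
  let ?c = "of_int i0 + real s * drift" and ?q = "walk_law w M (int s) i0 s" and ?R = "walk_range M i0 s"
  have "\<bar>crossing_weight (qP w (int s) i0 s) x i\<bar> \<le> (\<Sum>y\<in>{y. window n \<le> \<bar>of_int y - ?c\<bar>} \<inter> ?R. ?q y)"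
    unfolding qP_eq_sum_walk_law[OF M_nonneg w(1)]
    using x i by (intro abs_crossing_weight_far) (auto simp: walk_law_nonneg abs_minus_commute)
  also have "\<dots> \<le> two_sided_mgf w (tilt n) (int s) i0 s * exp (- tilt n * window n)"
    unfolding two_sided_mgf_def using n
    by (intro sum_far_le_exp) (auto simp: walk_law_nonneg tilt_def)
  also have "\<dots> \<le> real n ^ 4 * (1 / real n ^ 6)"
    using w(2) s i0 unfolding exp_tilt_window[OF n]
    by (intro mult_right_mono) (auto simp: mgf_controlled_def abs_le_iff less_imp_le)
  also have "\<dots> = 1 / real n ^ 2"
    using n by (simp add: field_simps eval_nat_numeral)
  finally show ?thesis .
qed

lemma nat_tlab_le_max_time:
  assumes "0 \<le> t" and "t \<le> T"
  shows "nat (tlab n t) \<le> max_time T n"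
  unfolding tlab_def max_time_def using assms by (intro nat_mono floor_mono mult_left_mono) auto

lemma abs_start_le_max_start:
  assumes "0 \<le> t" and "t \<le> T" and "\<bar>r\<bar> \<le> S"
  shows "\<bar>start (- drift) ybar n t r\<bar> \<le> max_start ybar S T n"
proof -
  let ?x = "real_of_int (xnr ybar n r)" and ?d = "real_of_int (start (- drift) ybar n t r - xnr ybar n r)"
  have "real_of_int \<bar>start (- drift) ybar n t r\<bar> \<le> \<bar>?x - real n * ybar\<bar> + \<bar>real n * ybar\<bar> + \<bar>?d\<bar>"
    using abs_triangle_ineq[of "?x - real n * ybar" "real n * ybar"] abs_triangle_ineq[of ?x ?d] by simp
  also have "\<dots> \<le> \<bar>real n * ybar\<bar> + S * sqrt (real n) + real n * T * \<bar>drift\<bar> + 3"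
    using abs_xnr_sub_le[OF assms(3), of ybar n] abs_start_sub_xnr_le[OF assms(1,2), of "- drift" ybar n r] by simp
  also have "\<dots> \<le> real_of_int (max_start ybar S T n)"
    unfolding max_start_def by (rule le_of_int_ceiling)
  finally show ?thesis
    by (simp only: of_int_le_iff)
qed

lemma level_radius_le:
  assumes "0 \<le> t" and "t \<le> T"
  shows "real_of_int (\<bar>xnr ybar n r - start (- drift) ybar n t r\<bar> + M * int (nat (tlab n t)))
    \<le> real n * (T * \<bar>drift\<bar> + real_of_int M * T) + 1"
proof -
  have "real (nat (tlab n t)) \<le> real n * T"
    using assms by (simp add: tlab_def order_trans[OF of_int_floor_le] mult_left_mono)
  then have "real_of_int M * real (nat (tlab n t)) \<le> real_of_int M * (real n * T)"
    using M_nonneg by (intro mult_left_mono) auto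
  then have "real_of_int M * real (nat (tlab n t)) \<le> real n * (real_of_int M * T)"
    by (metis mult.left_commute)
  moreover have "\<bar>real_of_int (xnr ybar n r - start (- drift) ybar n t r)\<bar> \<le> real n * T * \<bar>drift\<bar> + 1"
    using abs_start_sub_xnr_le[OF assms, of "- drift" ybar n r] by (simp add: abs_minus_commute)
  ultimately show ?thesis
    by (simp only: of_int_add of_int_mult of_int_abs of_int_of_nat_eq distrib_left mult.assoc)
qed

lemma abs_Hn_minus_EXc_le:
  fixes \<rho> :: "real \<Rightarrow> real" and C B \<gamma> :: real
  assumes w: "probvec_env M w" "mgf_controlled ybar S T n w" and n: "n \<ge> 1"
    and t: "0 \<le> t" "t \<le> T" and r: "\<bar>r\<bar> \<le> S" and L: "1 + \<bar>drift\<bar> \<le> window n"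
    and hoelder: "\<And>u. \<bar>\<rho> u - \<rho> ybar\<bar> \<le> C * \<bar>u - ybar\<bar> powr \<gamma>" "0 \<le> C" "0 < \<gamma>"
    and bounded: "\<And>u. \<bar>\<rho> u\<bar> \<le> B"
  shows "\<bar>Hn \<rho> w (- drift) ybar n t r - \<rho> ybar * EXc w (- drift) ybar n t r\<bar> \<le>
    (2 * window n + 1) * (C * ((window n + (1 + \<bar>drift\<bar>) + S * sqrt (real n) + 2) / real n) powr \<gamma>)
    + (2 * (real n * (T * \<bar>drift\<bar> + real_of_int M * T) + 1) + 1) * (2 * B * (1 / real n ^ 2))"
proof -
  define x i0 s where "x = xnr ybar n r" and "i0 = start (- drift) ybar n t r" and "s = nat (tlab n t)"
  define c K where "c = of_int i0 + real s * drift" and "K = \<bar>x - i0\<bar> + M * int s"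
  have cx: "\<bar>c - of_int x\<bar> \<le> 1 + \<bar>drift\<bar>"
    using abs_centre_sub_xnr_le[OF t(1)] by (simp add: c_def x_def i0_def s_def)
  have xy: "\<bar>of_int x - real n * ybar\<bar> \<le> S * sqrt (real n) + 2"
    unfolding x_def using r by (rule abs_xnr_sub_le)
  have "real (card {x - K..x + K}) \<le> 2 * (real n * (T * \<bar>drift\<bar> + real_of_int M * T) + 1) + 1"
    using level_radius_le[OF t, of ybar n r] M_nonneg by (simp add: K_def x_def i0_def s_def)
  moreover have "\<bar>Hn \<rho> w (- drift) ybar n t r - \<rho> ybar * EXc w (- drift) ybar n t r\<bar> \<le>
    (2 * window n + 1) * (C * ((window n + (1 + \<bar>drift\<bar>) + S * sqrt (real n) + 2) / real n) powr \<gamma>)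
    + real (card {x - K..x + K}) * (2 * B * (1 / real n ^ 2))"
    unfolding Hn_minus_EXc_eq_sum[OF M_nonneg w(1)] x_def[symmetric] i0_def[symmetric] s_def[symmetric] K_def[symmetric]
  proof (rule abs_sum_mult_window_le[where c = c])
    show "\<bar>crossing_weight (qP w (tlab n t) i0 s) x i\<bar> \<le> 1" for i
      unfolding qP_eq_sum_walk_law[OF M_nonneg w(1)]
      by (intro abs_crossing_weight_le_1) (simp_all add: walk_law_nonneg sum_walk_law[OF M_nonneg w(1)])
    show "\<bar>crossing_weight (qP w (tlab n t) i0 s) x i\<bar> \<le> 1 / real n ^ 2" if "window n < \<bar>of_int i - c\<bar>" for i
    proof -
      have "tlab n t = int s"
        using t(1) by (simp add: s_def tlab_def)
      then show ?thesis
        using abs_crossing_weight_far_le[OF w n nat_tlab_le_max_time[OF t] abs_start_le_max_start[OF t r]] that cx L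
        unfolding c_def x_def i0_def s_def by fastforce
    qed
    show "\<bar>\<rho> (of_int i / real n) - \<rho> ybar\<bar> \<le> C * ((window n + (1 + \<bar>drift\<bar>) + S * sqrt (real n) + 2) / real n) powr \<gamma>"
      if "\<bar>of_int i - c\<bar> \<le> window n" for i
      using that cx xy by (intro hoelder_rescaled[OF hoelder n]) (simp only: abs_le_iff, linarith)
    show "\<bar>\<rho> (of_int i / real n) - \<rho> ybar\<bar> \<le> 2 * B" for i
      using bounded[of "of_int i / real n"] bounded[of ybar] by linarith
  qed (use L bounded[of 0] hoelder in auto)
  moreover have "0 \<le> 2 * B * (1 / real n ^ 2)"
    using bounded[of 0] by simp
  ultimately show ?thesis
    by (smt (verit, best) mult_right_mono)
qed

lemma deviation_tendsto_0:
  fixes \<rho> :: "real \<Rightarrow> real" and C B \<gamma> :: real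
  assumes w: "probvec_env M w" "eventually (\<lambda>n. mgf_controlled ybar S T n w) sequentially"
    and S: "0 \<le> S" and T: "0 \<le> T"
    and hoelder: "\<And>u. \<bar>\<rho> u - \<rho> ybar\<bar> \<le> C * \<bar>u - ybar\<bar> powr \<gamma>" "0 \<le> C" "\<gamma> > 1/2"
    and bounded: "\<And>u. \<bar>\<rho> u\<bar> \<le> B"
  shows "(\<lambda>n. SUP (t, r)\<in>{0..T} \<times> {-S..S}. real n powr (-1/4) *
    \<bar>Hn \<rho> w (- drift) ybar n t r - \<rho> ybar * EXc w (- drift) ybar n t r\<bar>) \<longlonglongrightarrow> 0"
proof -
  define bound where "bound n = (2 * window n + 1) *
      (C * ((window n + (1 + \<bar>drift\<bar>) + S * sqrt (real n) + 2) / real n) powr \<gamma>)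
      + (2 * (real n * (T * \<bar>drift\<bar> + real_of_int M * T) + 1) + 1) * (2 * B * (1 / real n ^ 2))" for n
  have "eventually (\<lambda>n. n \<ge> 1 \<and> mgf_controlled ybar S T n w \<and> 1 + \<bar>drift\<bar> \<le> window n) sequentially"
    using w(2) eventually_ge_at_top[of 1] eventually_ge_window by eventually_elim auto
  then have "eventually (\<lambda>n. \<forall>(t, r)\<in>{0..T} \<times> {-S..S}. real n powr (-1/4) *
      \<bar>Hn \<rho> w (- drift) ybar n t r - \<rho> ybar * EXc w (- drift) ybar n t r\<bar> \<le> real n powr (-1/4) * bound n)
      sequentially"
  proof eventually_elim
    case (elim n)
    have "real n powr (-1/4) * \<bar>Hn \<rho> w (- drift) ybar n t r - \<rho> ybar * EXc w (- drift) ybar n t r\<bar>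
        \<le> real n powr (-1/4) * bound n" if t: "0 \<le> t" "t \<le> T" and r: "\<bar>r\<bar> \<le> S" for t r
      unfolding bound_def using elim hoelder(3)
      by (intro mult_left_mono abs_Hn_minus_EXc_le[OF w(1) _ _ t r _ hoelder(1,2) _ bounded]) auto
    then show ?case
      by (auto simp: abs_le_iff)
  qed
  moreover have "(\<lambda>n. real n powr (-1/4) * bound n) \<longlonglongrightarrow> 0"
    unfolding bound_def using hoelder(3) by (rule deviation_bound_tendsto_0)
  ultimately show ?thesis
    using S T by (intro SUP_tendsto_0) (auto simp: case_prod_beta)
qed

end

theorem lemma7p2:
  fixes M :: int and \<mu> :: "(int \<Rightarrow> real) measure" and \<rho> :: "real \<Rightarrow> real"
    and ybar S T :: real
  assumes M: "M \<ge> 1"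
    and prob: "prob_space \<mu>"
    and sets: "sets \<mu> = sets (PiM (UNIV :: int set) (\<lambda>_. borel))"
    and supp: "AE u in \<mu>. u \<in> probvec M"
    and A1: "\<not> (\<exists>h::int. h > 1 \<and> (\<exists>x::int. (\<Sum>\<^sub>\<infinity>k::int. envp \<mu> (x + k * h)) = 1))"
    and A2: "measure \<mu> {u \<in> space \<mu>. Max (u ` {-M..M}) < 1} > 0"
    and bdd: "bounded (range \<rho>)"
    and hoelder: "\<exists>\<gamma>>1/2. \<forall>a b. \<exists>C. \<forall>x\<in>{a..b}. \<forall>y\<in>{a..b}.
                     \<bar>\<rho> x - \<rho> y\<bar> \<le> C * \<bar>x - y\<bar> powr \<gamma>"
    and S: "0 \<le> S" and T: "0 \<le> T"
  shows "AE w in PiM (UNIV :: (int \<times> int) set) (\<lambda>_. \<mu>).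
           (\<lambda>n. SUP (t, r)\<in>{0..T} \<times> {-S..S}.
               real n powr (-1/4) *
               \<bar>Hn \<rho> w (- envV \<mu> M) ybar n t r - \<rho> ybar * EXc w (- envV \<mu> M) ybar n t r\<bar>)
           \<longlonglongrightarrow> 0"
proof -
  interpret iid_env M \<mu>
    by (rule iid_env.intro[OF M prob sets supp])
  obtain \<gamma> C B where \<gamma>: "\<gamma> > 1/2" and C: "C \<ge> 0" and B: "\<And>u. \<bar>\<rho> u\<bar> \<le> B"
    and hol: "\<And>u. \<bar>\<rho> u - \<rho> ybar\<bar> \<le> C * \<bar>u - ybar\<bar> powr \<gamma>"
    using hoelder_at_point[OF bdd hoelder] by blast
  show ?thesis
    using AE_probvec_env AE_eventually_mgf_controlled[OF S T, of ybar]
  proof eventually_elim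
    case (elim w)
    then show ?case
      by (intro deviation_tendsto_0[OF _ _ S T hol C \<gamma> B])
  qed
qed

end
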